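(* Let $d\ge2$ and let $K\subset\mathbb R^d$ be a convex polytope with $2d$ corners, namely the convex hull of the endpoints of its $d$ diameters, with diameters $0<l_d\le\dots\le l_1<\infty$ (i.e. $D_K^{(i)}=l_i$). Then there exists a box $B\subset K$ which is congruent to $\prod_{i=1}^d[0,2^{-2(d-1)}l_i]$.
   Context: Diameters of a convex body: for a convex body $K\subset\mathbb R^d$, $D_K^{(1)}:=\operatorname{diam}(K)=\max\{|x-y|:x,y\in K\}$, with orientation $p_K^{(1)}=\frac{x-y}{|x-y|}$ for a maximizing pair $x,y$. Let $H_{p^{(1)}_K}$ be the hyperplane through the origin perpendicular to $p^{(1)}_K$ and $D_K^{(2)}:=\operatorname{diam}(P_{H_{p^{(1)}_K}}(K))$, $P_H$ orthogonal projection onto $H$, with orientation $p^{(2)}_K\in H_{p^{(1)}_K}$; iteratively, $H_{p^{(i)}_K}$ is the hyperplane within $H_{p^{(i-1)}_K}$ perpendicular to $p^{(i)}_K$, and $D_K^{(i+1)}:=\operatorname{diam}(P_{H_{p^{(i)}_K}}(K))$. The $2d$ "corners" of the polytope are the endpoints (in $K$) of the segments realizing these $d$ diameters, and $K$ is their convex hull. *)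

theory Defs
  imports "HOL-Analysis.Analysis"
begin

text \<open>The subspace H after removing the first i orientations p 0, ..., p (i-1)
  (indices shifted to start at 0): H 0 is the whole space.\<close>
definition perp_sub :: "(nat \<Rightarrow> 'a::euclidean_space) \<Rightarrow> nat \<Rightarrow> 'a set" where
  "perp_sub p i = {v. \<forall>j<i. p j \<bullet> v = 0}"

definition proj_onto :: "'a::euclidean_space set \<Rightarrow> 'a \<Rightarrow> 'a" where
  "proj_onto H v = closest_point H v"

text \<open>Iterated diameters of K: for i < DIM('a), x i, y i are points of K whose
  projections onto perp_sub p i realise the diameter l i of the projection of K,
  and p i is the corresponding orientation (unit vector).\<close>
definition diameter_data ::
  "'a::euclidean_space set \<Rightarrow> (nat \<Rightarrow> 'a) \<Rightarrow> (nat \<Rightarrow> 'a) \<Rightarrow> (nat \<Rightarrow> real) \<Rightarrow> (nat \<Rightarrow> 'a) \<Rightarrow> bool"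
  where
  "diameter_data K x y l p \<longleftrightarrow>
     (\<forall>i<DIM('a).
        x i \<in> K \<and> y i \<in> K \<and>
        l i = diameter (proj_onto (perp_sub p i) ` K) \<and>
        l i = norm (proj_onto (perp_sub p i) (x i) - proj_onto (perp_sub p i) (y i)) \<and>
        p i = (proj_onto (perp_sub p i) (x i) - proj_onto (perp_sub p i) (y i)) /\<^sub>R l i)"

end

theory Submission
  imports Defs
begin

text \<open>Write \<open>e\<^sub>i = x\<^sub>i - y\<^sub>i\<close>. Since \<open>p\<^sub>k\<close> is orthogonal to \<open>p\<^sub>0, \<dots>, p\<^sub>k\<^sub>-\<^sub>1\<close>, its
  inner product with \<open>e\<^sub>i\<close> equals that with the projection of \<open>e\<^sub>i\<close> to \<open>H\<^sub>i\<close> when \<open>i \<le> k\<close>,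
  i.e. \<open>l\<^sub>i\<close> if \<open>i = k\<close> and \<open>0\<close> otherwise; for \<open>i > k\<close> it is bounded by the diameter \<open>l\<^sub>k\<close>.
  Hence the matrix \<open>(p\<^sub>k \<bullet> e\<^sub>i)\<close> is upper triangular with diagonal \<open>l\<^sub>k\<close> and rows bounded by \<open>l\<^sub>k\<close>,
  so back substitution writes every small vector \<open>\<Sum> \<delta>\<^sub>k p\<^sub>k\<close> with \<open>|\<delta>\<^sub>k| \<le> \<gamma> l\<^sub>k\<close> as
  \<open>\<Sum> r\<^sub>i e\<^sub>i\<close> with \<open>|r\<^sub>i| \<le> 2\<^sup>d\<^sup>-\<^sup>1 \<gamma>\<close>. The box centred at the mean of the midpoints of the
  diameters is thus contained in the set of means of points \<open>y\<^sub>i + s\<^sub>i e\<^sub>i\<close>, \<open>0 \<le> s\<^sub>i \<le> 1\<close>,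
  which lie in \<open>K\<close> by convexity.\<close>

lemma inner_closest_point_subspace:
  fixes H :: "'a::euclidean_space set"
  assumes "subspace H" "h \<in> H"
  shows "h \<bullet> closest_point H v = h \<bullet> v"
proof -
  let ?P = "closest_point H v"
  have H: "convex H" "closed H" "H \<noteq> {}"
    using assms(1) subspace_imp_convex closed_subspace subspace_0 by blast+
  have "?P \<in> H" using closest_point_in_set H(2,3) .
  then have "?P + h \<in> H" "?P - h \<in> H"
    using assms by (auto intro: subspace_add subspace_diff)
  then have "(v - ?P) \<bullet> h \<le> 0" "(v - ?P) \<bullet> (- h) \<le> 0"
    using closest_point_dot[OF H(1,2), of "?P + h" v] closest_point_dot[OF H(1,2), of "?P - h" v]
    by simp_all
  then have "(v - ?P) \<bullet> h = 0" by simp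
  then show ?thesis by (simp add: inner_diff_left inner_diff_right inner_commute)
qed

lemma subspace_perp_sub: "subspace (perp_sub p i)"
  by (auto simp: perp_sub_def subspace_def inner_add_right)

lemma proj_onto_perp_sub_in: "proj_onto (perp_sub p i) v \<in> perp_sub p i"
  unfolding proj_onto_def
  using subspace_perp_sub closed_subspace subspace_0 closest_point_in_set by blast

lemma inner_proj_onto_perp_sub:
  "h \<in> perp_sub p i \<Longrightarrow> h \<bullet> proj_onto (perp_sub p i) v = h \<bullet> v"
  unfolding proj_onto_def by (rule inner_closest_point_subspace[OF subspace_perp_sub])

lemma perp_sub_antimono: "i \<le> j \<Longrightarrow> perp_sub p j \<subseteq> perp_sub p i"
  by (auto simp: perp_sub_def)

lemma diameter_data_orientation:
  assumes "diameter_data K x y l p" "i < DIM('a::euclidean_space)" "l i \<noteq> 0"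
  shows "proj_onto (perp_sub p i) (x i) - proj_onto (perp_sub p i) (y i) = l i *\<^sub>R (p i :: 'a)"
    and "p i \<in> perp_sub p i" and "norm (p i) = 1"
proof -
  let ?v = "proj_onto (perp_sub p i) (x i) - proj_onto (perp_sub p i) (y i)"
  have l: "l i = norm ?v" and p: "p i = ?v /\<^sub>R l i"
    using assms(1,2) by (auto simp: diameter_data_def)
  show v: "?v = l i *\<^sub>R p i" using p assms(3) by simp
  have "?v \<in> perp_sub p i"
    by (intro subspace_diff[OF subspace_perp_sub] proj_onto_perp_sub_in)
  then show "p i \<in> perp_sub p i"
    using p subspace_scale[OF subspace_perp_sub] by simp
  show "norm (p i) = 1" using p l assms(3) by simp
qed

lemma diameter_data_orthonormal:
  fixes p :: "nat \<Rightarrow> 'a::euclidean_space"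
  assumes "diameter_data K x y l p" "\<forall>i<DIM('a). l i \<noteq> 0" "i < DIM('a)" "j < DIM('a)"
  shows "p i \<bullet> p j = (if i = j then 1 else 0)"
proof -
  have *: "p i \<bullet> p j = 0" if "i < j" "j < DIM('a)" for i j
    using diameter_data_orientation(2)[OF assms(1) that(2)] assms(2) that by (simp add: perp_sub_def)
  show ?thesis
    using diameter_data_orientation(3)[OF assms(1) assms(3)] assms *[of i j] *[of j i]
    by (auto simp: norm_eq_1 inner_commute dest: linorder_neqE_nat)
qed

text \<open>The orientation \<open>p\<^sub>k\<close> lies in \<open>H\<^sub>i\<close> for \<open>i \<le> k\<close>, so it sees \<open>x\<^sub>i - y\<^sub>i\<close> only through the
  projection onto \<open>H\<^sub>i\<close>, which is \<open>l\<^sub>i p\<^sub>i\<close>.\<close>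
lemma diameter_data_inner_diameter_pair:
  fixes p :: "nat \<Rightarrow> 'a::euclidean_space"
  assumes "diameter_data K x y l p" "\<forall>i<DIM('a). l i \<noteq> 0" "i \<le> k" "k < DIM('a)"
  shows "p k \<bullet> (x i - y i) = (if i = k then l i else 0)"
proof -
  have i: "i < DIM('a)" using assms by simp
  have "p k \<in> perp_sub p i"
    using perp_sub_antimono[OF assms(3)] diameter_data_orientation(2)[OF assms(1,4)] assms(2,4)
    by blast
  then have "p k \<bullet> (x i - y i) =
      p k \<bullet> (proj_onto (perp_sub p i) (x i) - proj_onto (perp_sub p i) (y i))"
    by (simp add: inner_diff_right inner_proj_onto_perp_sub)
  also have "\<dots> = l i * (p k \<bullet> p i)"
    using diameter_data_orientation(1)[OF assms(1) i] assms(2) i by simp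
  finally show ?thesis
    using diameter_data_orthonormal[OF assms(1,2,4) i] by simp
qed

lemma diameter_data_inner_le:
  fixes p :: "nat \<Rightarrow> 'a::euclidean_space"
  assumes "diameter_data K x y l p" "compact K" "k < DIM('a)" "l k \<noteq> 0" "u \<in> K" "v \<in> K"
  shows "\<bar>p k \<bullet> (u - v)\<bar> \<le> l k"
proof -
  let ?P = "proj_onto (perp_sub p k)"
  have "continuous_on K ?P"
    unfolding proj_onto_def
    using continuous_on_closest_point subspace_imp_convex closed_subspace subspace_0 subspace_perp_sub
    by (metis empty_iff)
  then have bounded: "bounded (?P ` K)"
    using assms(2) compact_continuous_image compact_imp_bounded by blast
  have "p k \<in> perp_sub p k" "norm (p k) = 1"
    using diameter_data_orientation(2,3)[OF assms(1,3,4)] by simp_all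
  then have "\<bar>p k \<bullet> (u - v)\<bar> = \<bar>p k \<bullet> (?P u - ?P v)\<bar>"
    by (simp add: inner_diff_right inner_proj_onto_perp_sub)
  also have "\<dots> \<le> dist (?P u) (?P v)"
    using Cauchy_Schwarz_ineq2[of "p k" "?P u - ?P v"] \<open>norm (p k) = 1\<close> by (simp add: dist_norm)
  also have "\<dots> \<le> diameter (?P ` K)"
    using assms(5,6) bounded by (intro diameter_bounded_bound) auto
  also have "\<dots> = l k" using assms(1,3) by (simp add: diameter_data_def)
  finally show ?thesis .
qed

lemma back_substitution_bound:
  fixes E r :: "nat \<Rightarrow> real"
  assumes "0 < c" "finite J" "\<forall>j\<in>J. \<bar>E j\<bar> \<le> c" "\<bar>\<delta>\<bar> \<le> \<gamma> * c"
  shows "\<bar>(\<delta> - (\<Sum>j\<in>J. E j * r j)) / c\<bar> \<le> \<gamma> + (\<Sum>j\<in>J. \<bar>r j\<bar>)"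
proof -
  have "\<bar>\<Sum>j\<in>J. E j * r j\<bar> \<le> (\<Sum>j\<in>J. \<bar>E j\<bar> * \<bar>r j\<bar>)"
    using sum_abs[of "\<lambda>j. E j * r j" J] by (simp add: abs_mult)
  also have "\<dots> \<le> (\<Sum>j\<in>J. c * \<bar>r j\<bar>)"
    using assms(3) by (intro sum_mono mult_right_mono) auto
  finally have "\<bar>\<delta> - (\<Sum>j\<in>J. E j * r j)\<bar> \<le> c * (\<gamma> + (\<Sum>j\<in>J. \<bar>r j\<bar>))"
    using assms(4) by (simp add: sum_distrib_left algebra_simps)
  then show ?thesis
    using assms(1) by (simp add: abs_div pos_divide_le_eq mult.commute)
qed

text \<open>The induction solves the last \<open>k\<close> equations, keeping the \<open>\<ell>\<^sup>1\<close>-norm of the solved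
  unknowns below \<open>\<gamma> (2\<^sup>k - 1)\<close>.\<close>
lemma upper_triangular_system_bounded_solution:
  fixes l \<delta> :: "nat \<Rightarrow> real" and E :: "nat \<Rightarrow> nat \<Rightarrow> real"
  assumes l: "\<forall>i<n. 0 < l i"
    and E: "\<forall>i j. i < j \<and> j < n \<longrightarrow> \<bar>E i j\<bar> \<le> l i"
    and \<delta>: "\<forall>i<n. \<bar>\<delta> i\<bar> \<le> \<gamma> * l i"
    and "0 \<le> \<gamma>"
  shows "\<exists>r. \<forall>i<n. l i * r i + (\<Sum>j\<in>{i<..<n}. E i j * r j) = \<delta> i \<and> \<bar>r i\<bar> \<le> \<gamma> * 2 ^ (n - 1)"
proof -
  let ?solves = "\<lambda>r i. l i * r i + (\<Sum>j\<in>{i<..<n}. E i j * r j) = \<delta> i \<and> \<bar>r i\<bar> \<le> \<gamma> * 2 ^ (n - 1)"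
  have "\<exists>r. (\<forall>i\<in>{n - k..<n}. ?solves r i) \<and> (\<Sum>j\<in>{n - k..<n}. \<bar>r j\<bar>) \<le> \<gamma> * (2 ^ k - 1)"
    if "k \<le> n" for k
    using that
  proof (induction k)
    case 0
    show ?case by (intro exI[of _ "\<lambda>_. 0"]) simp
  next
    case (Suc k)
    then obtain r where r: "\<forall>i\<in>{n - k..<n}. ?solves r i"
      and sum_r: "(\<Sum>j\<in>{n - k..<n}. \<bar>r j\<bar>) \<le> \<gamma> * (2 ^ k - 1)"
      by auto
    define i where "i = n - Suc k"
    have i: "i < n" "{i<..<n} = {n - k..<n}" "{n - Suc k..<n} = insert i {n - k..<n}"
      "i \<notin> {n - k..<n}"
      using Suc.prems by (auto simp: i_def)
    define v where "v = (\<delta> i - (\<Sum>j\<in>{i<..<n}. E i j * r j)) / l i"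
    have v_bound: "\<bar>v\<bar> \<le> \<gamma> * 2 ^ k"
    proof -
      have "\<bar>v\<bar> \<le> \<gamma> + (\<Sum>j\<in>{n - k..<n}. \<bar>r j\<bar>)"
        unfolding v_def i(2)
        by (rule back_substitution_bound) (use l E \<delta> i(1) Suc.prems in \<open>auto simp: i_def\<close>)
      then show ?thesis using sum_r by (simp add: algebra_simps)
    qed
    have "(2::real) ^ k \<le> 2 ^ (n - 1)"
      using Suc.prems by (intro power_increasing) auto
    then have v_bound': "\<bar>v\<bar> \<le> \<gamma> * 2 ^ (n - 1)"
      using v_bound \<open>0 \<le> \<gamma>\<close> by (meson mult_left_mono order_trans)
    have tail: "(\<Sum>j\<in>{i<..<n}. E i j * (r(i := v)) j) = (\<Sum>j\<in>{i<..<n}. E i j * r j)"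
      by (intro sum.cong) auto
    have "l i * v + (\<Sum>j\<in>{i<..<n}. E i j * r j) = \<delta> i"
      using l i(1) by (simp add: v_def less_imp_neq[symmetric])
    then have "?solves (r(i := v)) i"
      using tail v_bound' by simp
    moreover have "?solves (r(i := v)) j" if "j \<in> {n - k..<n}" for j
    proof -
      have "j \<noteq> i" "\<forall>j'\<in>{j<..<n}. j' \<noteq> i"
        using that i(4) by auto
      then show ?thesis using r that by simp
    qed
    moreover have "(\<Sum>j\<in>{n - Suc k..<n}. \<bar>(r(i := v)) j\<bar>) \<le> \<gamma> * (2 ^ Suc k - 1)"
    proof -
      have "(\<Sum>j\<in>{n - k..<n}. \<bar>(r(i := v)) j\<bar>) = (\<Sum>j\<in>{n - k..<n}. \<bar>r j\<bar>)"
        using i(4) by (intro sum.cong) auto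
      then have "(\<Sum>j\<in>{n - Suc k..<n}. \<bar>(r(i := v)) j\<bar>) = \<bar>v\<bar> + (\<Sum>j\<in>{n - k..<n}. \<bar>r j\<bar>)"
        using i(4) unfolding i(3) by simp
      also have "\<dots> \<le> \<gamma> * (2 ^ Suc k - 1)"
        using v_bound sum_r by (simp add: algebra_simps)
      finally show ?thesis .
    qed
    ultimately show ?case
      unfolding i(3) by (intro exI[of _ "r(i := v)"]) auto
  qed
  from this[of n] obtain r where "\<forall>i\<in>{n - n..<n}. ?solves r i" by blast
  then show ?thesis by (intro exI[of _ r]) (simp add: atLeast0LessThan)
qed

lemma orthonormal_family_eqI:
  fixes u :: "nat \<Rightarrow> 'a::euclidean_space"
  assumes orth: "\<forall>i<DIM('a). \<forall>j<DIM('a). u i \<bullet> u j = (if i = j then 1 else 0)"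
    and "\<forall>k<DIM('a). u k \<bullet> v = u k \<bullet> w"
  shows "v = w"
proof (rule ccontr)
  assume "v \<noteq> w"
  let ?S = "insert (v - w) (u ` {..<DIM('a)})"
  have vw: "u k \<bullet> (v - w) = 0" if "k < DIM('a)" for k
    using assms(2) that by (simp add: inner_diff_right)
  have "inj_on u {..<DIM('a)}"
    by (rule inj_onI) (metis lessThan_iff orth zero_neq_one)
  moreover have "v - w \<notin> u ` {..<DIM('a)}"
    using vw orth by (metis imageE lessThan_iff zero_neq_one)
  ultimately have "card ?S = DIM('a) + 1"
    by (simp add: card_image)
  moreover have "independent ?S"
  proof (rule pairwise_orthogonal_independent)
    show "pairwise orthogonal ?S"
      using vw orth by (auto simp: pairwise_def orthogonal_def inner_commute)
    show "0 \<notin> ?S"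
      using \<open>v \<noteq> w\<close> orth by (metis imageE inner_zero_left insertE lessThan_iff zero_neq_one eq_iff_diff_eq_0)
  qed
  then have "card ?S \<le> DIM('a)"
    by (rule independent_bound[THEN conjunct2])
  ultimately show False by simp
qed

lemma triangular_combination_eq:
  fixes p e :: "nat \<Rightarrow> 'a::euclidean_space" and l r \<delta> :: "nat \<Rightarrow> real"
  assumes orth: "\<forall>i<DIM('a). \<forall>j<DIM('a). p i \<bullet> p j = (if i = j then 1 else 0)"
    and diag: "\<forall>i k. i \<le> k \<and> k < DIM('a) \<longrightarrow> p k \<bullet> e i = (if i = k then l i else 0)"
    and r: "\<forall>i<DIM('a). l i * r i + (\<Sum>j\<in>{i<..<DIM('a)}. (p i \<bullet> e j) * r j) = \<delta> i"
  shows "(\<Sum>j<DIM('a). r j *\<^sub>R e j) = (\<Sum>j<DIM('a). \<delta> j *\<^sub>R p j)"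
proof (rule orthonormal_family_eqI[OF orth], intro allI impI)
  let ?d = "DIM('a)"
  fix k assume k: "k < ?d"
  have split: "{..<?d} = {..<k} \<union> ({k} \<union> {k<..<?d})" using k by auto
  have "p k \<bullet> (\<Sum>j<?d. r j *\<^sub>R e j) = (\<Sum>j<?d. (p k \<bullet> e j) * r j)"
    by (simp add: inner_sum_right mult.commute)
  also have "\<dots> = (\<Sum>j<k. (p k \<bullet> e j) * r j) + ((p k \<bullet> e k) * r k + (\<Sum>j\<in>{k<..<?d}. (p k \<bullet> e j) * r j))"
    unfolding split by (subst sum.union_disjoint, auto)+
  also have "\<dots> = \<delta> k"
    using diag r k by simp
  also have "\<dots> = (\<Sum>j<?d. if j = k then \<delta> j else 0)"
    using k by simp
  also have "\<dots> = p k \<bullet> (\<Sum>j<?d. \<delta> j *\<^sub>R p j)"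
    unfolding inner_sum_right using orth k by (intro sum.cong) auto
  finally show "p k \<bullet> (\<Sum>j<?d. r j *\<^sub>R e j) = p k \<bullet> (\<Sum>j<?d. \<delta> j *\<^sub>R p j)" .
qed

lemma box_subset_convex_triangular:
  fixes K :: "'a::euclidean_space set" and x y p :: "nat \<Rightarrow> 'a" and l :: "nat \<Rightarrow> real"
  assumes "convex K"
    and xy: "\<forall>i<DIM('a). x i \<in> K \<and> y i \<in> K"
    and orth: "\<forall>i<DIM('a). \<forall>j<DIM('a). p i \<bullet> p j = (if i = j then 1 else 0)"
    and l: "\<forall>i<DIM('a). 0 < l i"
    and diag: "\<forall>i k. i \<le> k \<and> k < DIM('a) \<longrightarrow> p k \<bullet> (x i - y i) = (if i = k then l i else 0)"
    and width: "\<forall>i k. k < i \<and> i < DIM('a) \<longrightarrow> \<bar>p k \<bullet> (x i - y i)\<bar> \<le> l k"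
    and "0 \<le> \<beta>" and \<beta>: "real DIM('a) * \<beta> * 2 ^ (DIM('a) - 1) \<le> 1"
  shows "\<exists>a. {a + (\<Sum>i<DIM('a). t i *\<^sub>R p i) | t. \<forall>i<DIM('a). 0 \<le> t i \<and> t i \<le> \<beta> * l i} \<subseteq> K"
proof -
  let ?d = "DIM('a)"
  define e where "e i = x i - y i" for i
  define \<gamma> where "\<gamma> = \<beta> / 2"
  define a where "a = (\<Sum>i<?d. (1 / real ?d) *\<^sub>R (y i + (1 / 2) *\<^sub>R e i)) - (\<Sum>k<?d. (\<gamma> * l k) *\<^sub>R p k)"
  have "a + (\<Sum>i<?d. t i *\<^sub>R p i) \<in> K" if t: "\<forall>i<?d. 0 \<le> t i \<and> t i \<le> \<beta> * l i" for t
  proof -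
    define \<delta> where "\<delta> k = t k - \<gamma> * l k" for k
    have "\<forall>k<?d. \<bar>\<delta> k\<bar> \<le> \<gamma> * l k"
    proof (intro allI impI)
      fix k assume "k < ?d"
      then have "0 \<le> t k" "t k \<le> 2 * (\<gamma> * l k)" using t by (auto simp: \<gamma>_def)
      then show "\<bar>\<delta> k\<bar> \<le> \<gamma> * l k" by (simp add: \<delta>_def abs_le_iff)
    qed
    then obtain r where r: "\<forall>i<?d. l i * r i + (\<Sum>j\<in>{i<..<?d}. (p i \<bullet> e j) * r j) = \<delta> i
        \<and> \<bar>r i\<bar> \<le> \<gamma> * 2 ^ (?d - 1)"
      using upper_triangular_system_bounded_solution[of ?d l "\<lambda>i j. p i \<bullet> e j" \<delta> \<gamma>]
        l width \<open>0 \<le> \<beta>\<close> by (auto simp: e_def \<gamma>_def)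
    have "\<forall>i k. i \<le> k \<and> k < ?d \<longrightarrow> p k \<bullet> e i = (if i = k then l i else 0)"
      using diag by (simp add: e_def)
    from triangular_combination_eq[OF orth this] r
    have coords: "(\<Sum>j<?d. r j *\<^sub>R e j) = (\<Sum>j<?d. \<delta> j *\<^sub>R p j)"
      by blast
    define s where "s i = 1 / 2 + real ?d * r i" for i
    have s: "0 \<le> s i \<and> s i \<le> 1" if "i < ?d" for i
    proof -
      have "\<bar>real ?d * r i\<bar> \<le> real ?d * (\<gamma> * 2 ^ (?d - 1))"
        using r that by (simp add: abs_mult mult_left_mono)
      also have "\<dots> \<le> 1 / 2" using \<beta> by (simp add: \<gamma>_def)
      finally show ?thesis by (auto simp: s_def abs_le_iff)
    qed
    have "y i + s i *\<^sub>R e i \<in> K" if "i < ?d" for i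
      using convexD[OF \<open>convex K\<close>, of "y i" "x i" "1 - s i" "s i"] xy s that
      by (simp add: e_def algebra_simps)
    then have "(\<Sum>i<?d. (1 / real ?d) *\<^sub>R (y i + s i *\<^sub>R e i)) \<in> K"
      by (intro convex_sum[OF _ \<open>convex K\<close>]) auto
    also have "(\<Sum>i<?d. (1 / real ?d) *\<^sub>R (y i + s i *\<^sub>R e i))
        = (\<Sum>i<?d. (1 / real ?d) *\<^sub>R (y i + (1 / 2) *\<^sub>R e i)) + (\<Sum>j<?d. r j *\<^sub>R e j)"
      by (simp add: s_def scaleR_add_right scaleR_add_left sum.distrib)
    also have "\<dots> = a + (\<Sum>i<?d. t i *\<^sub>R p i)"
      by (simp add: coords a_def \<delta>_def scaleR_diff_left sum_subtractf)
    finally show ?thesis .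
  qed
  then show ?thesis by blast
qed

lemma dim_mult_two_power_le:
  "real n * (1 / 2 ^ (2 * (n - 1))) * 2 ^ (n - 1) \<le> 1"
proof -
  have "n \<le> 2 ^ (n - 1)"
    using less_exp[of "n - 1"] by linarith
  then have "real n \<le> 2 ^ (n - 1)"
    by (metis of_nat_le_iff of_nat_numeral of_nat_power)
  moreover have "(2::real) ^ (2 * (n - 1)) = 2 ^ (n - 1) * 2 ^ (n - 1)"
    by (simp add: mult_2 power_add)
  ultimately show ?thesis by simp
qed

theorem lemma1:
  fixes K :: "'a::euclidean_space set"
    and x y p :: "nat \<Rightarrow> 'a" and l :: "nat \<Rightarrow> real"
  assumes "DIM('a) \<ge> 2"
    and "diameter_data K x y l p"
    and "K = convex hull ((x ` {..<DIM('a)}) \<union> (y ` {..<DIM('a)}))"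
    and "0 < l (DIM('a) - 1)"
    and "\<forall>i j. i \<le> j \<and> j < DIM('a) \<longrightarrow> l j \<le> l i"
  shows "\<exists>a u. (\<forall>i<DIM('a). \<forall>j<DIM('a). u i \<bullet> u j = (if i = j then 1 else 0)) \<and>
           {a + (\<Sum>i<DIM('a). t i *\<^sub>R u i) | t.
              \<forall>i<DIM('a). 0 \<le> t i \<and> t i \<le> l i / 2 ^ (2 * (DIM('a) - 1))} \<subseteq> K"
proof -
  \<comment> \<open>The argument works in every dimension.\<close>
  let ?d = "DIM('a)" and ?\<beta> = "1 / 2 ^ (2 * (DIM('a) - 1)) :: real"
  have l: "\<forall>i<?d. 0 < l i"
  proof (intro allI impI)
    fix i assume "i < ?d"
    then have "l (?d - 1) \<le> l i" using assms(5) by simp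
    then show "0 < l i" using assms(4) by simp
  qed
  then have l_nz: "\<forall>i<?d. l i \<noteq> 0" by auto
  have "compact K" "convex K"
    unfolding assms(3) by (simp_all add: compact_convex_hull finite_imp_compact)
  have xy: "\<forall>i<?d. x i \<in> K \<and> y i \<in> K"
    unfolding assms(3) by (auto intro: hull_inc)
  have orth: "\<forall>i<?d. \<forall>j<?d. p i \<bullet> p j = (if i = j then 1 else 0)"
    using diameter_data_orthonormal[OF assms(2) l_nz] by blast
  have diag: "\<forall>i k. i \<le> k \<and> k < ?d \<longrightarrow> p k \<bullet> (x i - y i) = (if i = k then l i else 0)"
    using diameter_data_inner_diameter_pair[OF assms(2) l_nz] by blast
  have width: "\<forall>i k. k < i \<and> i < ?d \<longrightarrow> \<bar>p k \<bullet> (x i - y i)\<bar> \<le> l k"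
    using diameter_data_inner_le[OF assms(2) \<open>compact K\<close>] l_nz xy by simp
  obtain a where "{a + (\<Sum>i<?d. t i *\<^sub>R p i) | t. \<forall>i<?d. 0 \<le> t i \<and> t i \<le> ?\<beta> * l i} \<subseteq> K"
    using box_subset_convex_triangular[OF \<open>convex K\<close> xy orth l diag width _ dim_mult_two_power_le]
    by auto
  then show ?thesis
    using orth by (intro exI[of _ a] exI[of _ p]) (simp add: mult.commute)
qed

end
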